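(* Let $0<\alpha<\beta<1$ and let $t\geq 1$ be an integer. Let $\mathcal{P}_t'$ denote the set of real polynomials $f$ of degree at most $t$ satisfying $f(0)=0$ and $f(1)=1$. Then the minimization problem \[ \min_{f\in\mathcal{P}_t'} \frac{\max_{\lambda\in[0,\alpha]}|f(\lambda)|}{\min_{\lambda\in[\beta,1]}|f(\lambda)|} \] is solved by \[ f_t^\star(\lambda)=\prod_{s=0}^{t-1}\frac{\lambda-r_{s,t}}{1-r_{s,t}},\qquad r_{s,t}:=\alpha\,\frac{\cos\!\big(\frac{\pi(s+1/2)}{t}\big)+\cos\!\big(\frac{\pi}{2t}\big)}{1+\cos\!\big(\frac{\pi}{2t}\big)} . \]
   Context: The objective is taken to be $+\infty$ when the denominator vanishes. The polynomial $f_t^\star$ is an affinely reparametrized Chebyshev polynomial of the first kind of degree $t$; note $r_{t-1,t}=0$. *)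

theory Defs
  imports "HOL-Analysis.Analysis" "HOL-Computational_Algebra.Polynomial"
begin

definition Pt' :: "nat \<Rightarrow> real poly set" where
  "Pt' t = {f. degree f \<le> t \<and> poly f 0 = 0 \<and> poly f 1 = 1}"

text \<open>Max/min of a continuous function on a compact interval are
  written as Sup/Inf of the image (they are attained).\<close>
definition ratio_obj :: "real \<Rightarrow> real \<Rightarrow> real poly \<Rightarrow> ereal" where
  "ratio_obj \<alpha> \<beta> f =
     (let M = Sup ((\<lambda>x. \<bar>poly f x\<bar>) ` {0..\<alpha>});
          m = Inf ((\<lambda>x. \<bar>poly f x\<bar>) ` {\<beta>..1})
      in if m = 0 then PInfty else ereal (M / m))"

definition cheb_root :: "real \<Rightarrow> nat \<Rightarrow> nat \<Rightarrow> real" where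
  "cheb_root \<alpha> s t =
     \<alpha> * (cos (pi * (real s + 1/2) / real t) + cos (pi / (2 * real t)))
       / (1 + cos (pi / (2 * real t)))"

definition fstar :: "real \<Rightarrow> nat \<Rightarrow> real poly" where
  "fstar \<alpha> t = (\<Prod>s<t. smult (1 / (1 - cheb_root \<alpha> s t)) [:- cheb_root \<alpha> s t, 1:])"

end

theory Submission
  imports Defs
begin

text \<open>
  \<open>fstar \<alpha> t\<close> is the Chebyshev polynomial \<open>T\<^sub>t\<close> composed with the increasing affine map
  that sends \<open>[-cos (pi / (2t)), 1]\<close> onto \<open>[0, \<alpha>]\<close>, normalised to be \<open>1\<close> at \<open>1\<close>. On
  \<open>[0, \<alpha>]\<close> it is therefore bounded in modulus by its value at \<open>\<alpha>\<close>, which it attains with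
  alternating signs at \<open>t\<close> points, and since all its zeros lie in \<open>[0, \<alpha>]\<close> it increases on
  \<open>[\<alpha>, 1]\<close>; so its ratio is \<open>fstar(\<alpha>) / fstar(\<beta>)\<close>. If an admissible \<open>p\<close> had a smaller
  ratio, then after rescaling \<open>p\<close> to agree with \<open>fstar\<close> at \<open>\<beta>\<close> the difference \<open>fstar - c p\<close>
  would still alternate in sign at those \<open>t\<close> points. That gives \<open>t - 1\<close> zeros in \<open>(0, \<alpha>)\<close>
  besides the zeros \<open>0\<close> and \<open>\<beta>\<close>: too many for a nonzero polynomial of degree at most \<open>t\<close>.
\<close>

fun cheb_poly :: "nat \<Rightarrow> 'a::comm_ring_1 poly" where
  "cheb_poly 0 = 1"
| "cheb_poly (Suc 0) = [:0, 1:]"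
| "cheb_poly (Suc (Suc n)) = pCons 0 (smult 2 (cheb_poly (Suc n))) - cheb_poly n"

lemma poly_cheb_poly_cos: "poly (cheb_poly n) (cos x) = cos (real n * x)"
proof (induction n rule: cheb_poly.induct)
  case (3 n)
  have "cos (real (Suc (Suc n)) * x) + cos (real n * x) = 2 * cos x * cos (real (Suc n) * x)"
    using cos_add[of "real (Suc n) * x" x] cos_diff[of "real (Suc n) * x" x]
    by (simp add: algebra_simps)
  then show ?case using 3 by (simp add: algebra_simps)
qed simp_all

lemma degree_cheb_poly: "degree (cheb_poly n :: 'a::comm_ring_1 poly) \<le> n"
proof (induction n rule: cheb_poly.induct)
  case (3 n)
  have "degree (pCons 0 (smult (2::'a) (cheb_poly (Suc n)))) \<le> Suc (Suc n)"
    using "3.IH"(1) degree_smult_le[of 2 "cheb_poly (Suc n) :: 'a poly"]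
    by (intro order_trans[OF degree_pCons_le]) simp
  then show ?case using "3.IH" by (simp add: degree_diff_le)
qed simp_all

lemma coeff_cheb_poly_degree:
  "coeff (cheb_poly n :: 'a::comm_ring_1 poly) n = (if n = 0 then 1 else 2 ^ (n - 1))"
proof (induction n rule: cheb_poly.induct)
  case (3 n)
  have "coeff (cheb_poly n :: 'a poly) (Suc (Suc n)) = 0"
    using degree_cheb_poly[of n, where 'a='a] by (intro coeff_eq_0) auto
  then show ?case using "3.IH" by simp
qed simp_all

lemma poly_cheb_poly_one: "poly (cheb_poly n) (1::'a::comm_ring_1) = 1"
  by (induction n rule: cheb_poly.induct) simp_all

lemma abs_poly_cheb_poly_le_one:
  fixes x :: real
  assumes "\<bar>x\<bar> \<le> 1"
  shows "\<bar>poly (cheb_poly n) x\<bar> \<le> 1"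
proof -
  have "x = cos (arccos x)" using assms by simp
  then show ?thesis by (metis abs_cos_le_one poly_cheb_poly_cos)
qed

lemma cheb_poly_eq_prod:
  assumes "1 \<le> t"
  shows "cheb_poly t = smult (2 ^ (t - 1)) (\<Prod>s<t. [:- cos (pi * (real s + 1/2) / real t), 1:])"
    (is "_ = smult _ ?P")
proof (rule poly_eqI_degree_lead_coeff[where n = t])
  define \<theta> where "\<theta> s = pi * (real s + 1/2) / real t" for s
  have \<theta>_range: "0 \<le> \<theta> s \<and> \<theta> s \<le> pi" if "s < t" for s
  proof -
    have "pi * (real s + 1/2) \<le> pi * real t" using that by (intro mult_left_mono) auto
    then show ?thesis using assms by (simp add: \<theta>_def divide_le_eq)
  qed
  have "inj_on (\<lambda>s. cos (\<theta> s)) {..<t}"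
  proof (rule inj_onI)
    fix a b assume "a \<in> {..<t}" "b \<in> {..<t}" "cos (\<theta> a) = cos (\<theta> b)"
    then have "\<theta> a = \<theta> b" using \<theta>_range cos_inj_pi by blast
    then show "a = b" using assms by (simp add: \<theta>_def field_simps)
  qed
  then show "t \<le> card ((\<lambda>s. cos (\<theta> s)) ` {..<t})" by (simp add: card_image)
  have deg_P: "degree ?P = t" by (subst degree_prod_eq_sum_degree) auto
  then have "coeff ?P t = 1"
    using lead_coeff_prod[of "\<lambda>s. [:- cos (\<theta> s), 1:]" "{..<t}"] by (simp add: \<theta>_def)
  then show "coeff (cheb_poly t) t = coeff (smult (2 ^ (t - 1)) ?P) t"
    using coeff_cheb_poly_degree[of t] assms by simp
  show "degree (cheb_poly t :: real poly) \<le> t" by (rule degree_cheb_poly)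
  show "degree (smult (2 ^ (t - 1)) ?P) \<le> t" using deg_P by simp
  fix z assume "z \<in> (\<lambda>s. cos (\<theta> s)) ` {..<t}"
  then obtain s where s: "s < t" "z = cos (\<theta> s)" by auto
  have "real t * \<theta> s = real s * pi + pi / 2" using assms by (simp add: \<theta>_def field_simps)
  then have "poly (cheb_poly t) z = 0" using s by (simp add: poly_cheb_poly_cos cos_add)
  moreover have "poly ?P z = 0" using s by (auto simp: poly_prod \<theta>_def)
  ultimately show "poly (cheb_poly t) z = poly (smult (2 ^ (t - 1)) ?P) z" by simp
qed

lemma card_roots_ge_of_alternating_signs:
  fixes q :: "real poly" and \<nu> :: "nat \<Rightarrow> real"
  assumes dec: "\<And>j k. j < k \<Longrightarrow> k < n \<Longrightarrow> \<nu> k < \<nu> j"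
    and alt: "\<And>k. k < n \<Longrightarrow> 0 < (-1) ^ k * poly q (\<nu> k)"
  shows "n - 1 \<le> card {x. \<nu> (n - 1) < x \<and> x < \<nu> 0 \<and> poly q x = 0}"
proof (cases "n = 0")
  case False
  have dec_le: "\<nu> k \<le> \<nu> j" if "j \<le> k" "k < n" for j k
    using dec[of j k] that by (cases "j = k") auto
  have "\<exists>x. \<nu> (Suc k) < x \<and> x < \<nu> k \<and> poly q x = 0" if "Suc k < n" for k
  proof -
    have "0 < ((-1) ^ k * poly q (\<nu> k)) * ((-1) ^ Suc k * poly q (\<nu> (Suc k)))"
      using that by (intro mult_pos_pos alt) simp_all
    also have "\<dots> = - (poly q (\<nu> (Suc k)) * poly q (\<nu> k))"
      by (cases "even k") simp_all
    finally have "poly q (\<nu> (Suc k)) * poly q (\<nu> k) < 0" by simp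
    then show ?thesis using poly_IVT[of "\<nu> (Suc k)" "\<nu> k" q] dec that by auto
  qed
  then obtain z where z: "\<And>k. Suc k < n \<Longrightarrow> \<nu> (Suc k) < z k \<and> z k < \<nu> k \<and> poly q (z k) = 0"
    by metis
  have "inj_on z {..<n - 1}"
  proof (rule linorder_inj_onI')
    fix j k assume "j \<in> {..<n - 1}" "k \<in> {..<n - 1}" "j < k"
    then have "z k < \<nu> k" "\<nu> k \<le> \<nu> (Suc j)" "\<nu> (Suc j) < z j"
      using z dec_le[of "Suc j" k] by auto
    then show "z j \<noteq> z k" by linarith
  qed
  moreover have "z ` {..<n - 1} \<subseteq> {x. \<nu> (n - 1) < x \<and> x < \<nu> 0 \<and> poly q x = 0}"
  proof safe
    fix k assume "k < n - 1"
    then have "Suc k < n" by simp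
    then show "\<nu> (n - 1) < z k" "z k < \<nu> 0" "poly q (z k) = 0"
      using z[of k] dec_le[of "Suc k" "n - 1"] dec_le[of 0 k] by fastforce+
  qed
  moreover have "q \<noteq> 0" using alt[of 0] False by auto
  from poly_roots_finite[OF this] have "finite {x. \<nu> (n - 1) < x \<and> x < \<nu> 0 \<and> poly q x = 0}"
    by (rule finite_subset[rotated]) auto
  ultimately show ?thesis using card_inj_on_le by fastforce
qed simp

lemma equioscillating_poly_extremal:
  fixes G p :: "real poly" and \<nu> :: "nat \<Rightarrow> real"
  assumes "1 \<le> t" "\<alpha> < \<beta>" "degree G \<le> t" "degree p \<le> t"
    and "poly G 0 = 0" "poly p 0 = 0" "0 < poly G \<beta>"
    and dec: "\<And>j k. j < k \<Longrightarrow> k < t \<Longrightarrow> \<nu> k < \<nu> j"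
    and nodes: "\<And>k. k < t \<Longrightarrow> \<nu> k \<in> {0..\<alpha>}"
    and alt: "\<And>k. k < t \<Longrightarrow> poly G (\<nu> k) = (-1) ^ k * A"
    and bound: "\<And>x. x \<in> {0..\<alpha>} \<Longrightarrow> \<bar>poly p x\<bar> \<le> K"
  shows "\<bar>poly p \<beta>\<bar> * A \<le> K * poly G \<beta>"
proof (rule ccontr)
  assume "\<not> ?thesis"
  then have less: "K * poly G \<beta> < \<bar>poly p \<beta>\<bar> * A" by simp
  have "0 \<le> K" using bound[of 0] nodes[of 0] assms by auto
  then have "0 \<le> K * poly G \<beta>" using assms by simp
  then have p\<beta>: "poly p \<beta> \<noteq> 0" using less by auto
  define c where "c = poly G \<beta> / poly p \<beta>"
  define q where "q = G - smult c p"
  have small: "\<bar>c * poly p x\<bar> < A" if "x \<in> {0..\<alpha>}" for x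
  proof -
    have "\<bar>c * poly p x\<bar> = poly G \<beta> * \<bar>poly p x\<bar> / \<bar>poly p \<beta>\<bar>"
      using assms by (simp add: c_def abs_mult)
    also have "\<dots> \<le> poly G \<beta> * K / \<bar>poly p \<beta>\<bar>"
      using bound that assms by (intro divide_right_mono mult_left_mono) auto
    also have "\<dots> < A" using less p\<beta> by (simp add: divide_less_eq mult.commute)
    finally show ?thesis .
  qed
  have sign: "0 < (-1) ^ k * poly q (\<nu> k)" if "k < t" for k
  proof -
    have "(-1) ^ k * poly q (\<nu> k) = A - (-1) ^ k * (c * poly p (\<nu> k))"
      using alt[OF that] by (simp add: q_def algebra_simps)
    moreover have "(-1) ^ k * (c * poly p (\<nu> k)) < A"
      using small[OF nodes[OF that]] by (cases "even k") auto
    ultimately show ?thesis by simp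
  qed
  define S where "S = {x. \<nu> (t - 1) < x \<and> x < \<nu> 0 \<and> poly q x = 0}"
  have "t - 1 \<le> card S"
    unfolding S_def using card_roots_ge_of_alternating_signs dec sign by blast
  have "0 \<le> \<nu> (t - 1)" "0 \<le> \<nu> 0" "\<nu> 0 \<le> \<alpha>" using nodes \<open>1 \<le> t\<close> by auto
  then have "0 \<notin> insert \<beta> S" "\<beta> \<notin> S" using \<open>\<alpha> < \<beta>\<close> unfolding S_def by auto
  moreover have "q \<noteq> 0" using sign[of 0] assms by auto
  then have "finite {x. poly q x = 0}" by (rule poly_roots_finite)
  moreover have "insert 0 (insert \<beta> S) \<subseteq> {x. poly q x = 0}"
    using assms p\<beta> by (auto simp: S_def q_def c_def)
  ultimately have "card S + 2 \<le> card {x. poly q x = 0}"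
    by (metis card_insert_disjoint card_mono finite_insert finite_subset add_2_eq_Suc')
  then have "t + 1 \<le> card {x. poly q x = 0}" using \<open>t - 1 \<le> card S\<close> by linarith
  also have "\<dots> \<le> degree q" by (rule card_poly_roots_bound[OF \<open>q \<noteq> 0\<close>])
  also have "\<dots> \<le> t"
    unfolding q_def using assms degree_smult_le[of c p] by (meson degree_diff_le le_trans)
  finally show False by simp
qed

lemma ratio_obj_eqI:
  assumes "a \<in> {0..\<alpha>}" "\<And>x. x \<in> {0..\<alpha>} \<Longrightarrow> \<bar>poly f x\<bar> \<le> \<bar>poly f a\<bar>"
    and "b \<in> {\<beta>..1}" "\<And>x. x \<in> {\<beta>..1} \<Longrightarrow> \<bar>poly f b\<bar> \<le> \<bar>poly f x\<bar>"
    and "poly f b \<noteq> 0"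
  shows "ratio_obj \<alpha> \<beta> f = ereal (\<bar>poly f a\<bar> / \<bar>poly f b\<bar>)"
proof -
  have "Sup ((\<lambda>x. \<bar>poly f x\<bar>) ` {0..\<alpha>}) = \<bar>poly f a\<bar>"
    using assms(1,2) by (intro cSup_eq_maximum) auto
  moreover have "Inf ((\<lambda>x. \<bar>poly f x\<bar>) ` {\<beta>..1}) = \<bar>poly f b\<bar>"
    using assms(3,4) by (intro cInf_eq_minimum) auto
  ultimately show ?thesis using assms(5) by (simp add: ratio_obj_def)
qed

lemma ratio_obj_ge:
  assumes "\<beta> \<le> 1" "0 \<le> r"
    and bound: "\<And>K. (\<And>x. x \<in> {0..\<alpha>} \<Longrightarrow> \<bar>poly f x\<bar> \<le> K) \<Longrightarrow> r * \<bar>poly f \<beta>\<bar> \<le> K"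
  shows "ereal r \<le> ratio_obj \<alpha> \<beta> f"
proof -
  define M where "M = Sup ((\<lambda>x. \<bar>poly f x\<bar>) ` {0..\<alpha>})"
  define m where "m = Inf ((\<lambda>x. \<bar>poly f x\<bar>) ` {\<beta>..1})"
  have "compact ((\<lambda>x. \<bar>poly f x\<bar>) ` {0..\<alpha>})"
    by (intro compact_continuous_image continuous_intros) auto
  then have "bdd_above ((\<lambda>x. \<bar>poly f x\<bar>) ` {0..\<alpha>})"
    by (simp add: bounded_imp_bdd_above compact_imp_bounded)
  then have "r * \<bar>poly f \<beta>\<bar> \<le> M" unfolding M_def by (intro bound cSup_upper) auto
  moreover have "0 \<le> m" "m \<le> \<bar>poly f \<beta>\<bar>"
    unfolding m_def using assms(1) by (auto intro!: cInf_greatest cInf_lower bdd_belowI[of _ 0])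
  ultimately have "m \<noteq> 0 \<Longrightarrow> r \<le> M / m"
    using assms(2) by (simp add: le_divide_eq) (meson mult_left_mono order_trans)
  then show ?thesis by (simp add: ratio_obj_def Let_def M_def m_def)
qed

text \<open>The affine map sending \<open>[-cos (pi / (2t)), 1]\<close> onto \<open>[0, \<alpha>]\<close>; its left endpoint is the
  smallest zero of \<open>T\<^sub>t\<close>, which is why \<open>cheb_root \<alpha> (t - 1) t = 0\<close>.\<close>

definition cheb_scale :: "real \<Rightarrow> nat \<Rightarrow> real \<Rightarrow> real" where
  "cheb_scale \<alpha> t y = \<alpha> * (y + cos (pi / (2 * real t))) / (1 + cos (pi / (2 * real t)))"

lemma cos_pi_div_double_nonneg: "0 \<le> cos (pi / (2 * real t))"
proof (cases "t = 0")
  case False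
  then have "pi / (2 * real t) \<le> pi / 2" by (intro divide_left_mono) auto
  moreover have "0 \<le> pi / (2 * real t)" by simp
  ultimately show ?thesis by (intro cos_ge_zero) linarith+
qed simp

lemma cheb_root_eq_cheb_scale:
  "cheb_root \<alpha> s t = cheb_scale \<alpha> t (cos (pi * (real s + 1/2) / real t))"
  by (simp add: cheb_root_def cheb_scale_def)

lemma cheb_scale_diff:
  "cheb_scale \<alpha> t y - cheb_scale \<alpha> t z = \<alpha> / (1 + cos (pi / (2 * real t))) * (y - z)"
  by (simp add: cheb_scale_def diff_divide_distrib[symmetric] algebra_simps)

lemma cheb_scale_strict_mono:
  assumes "0 < \<alpha>" "y < z"
  shows "cheb_scale \<alpha> t y < cheb_scale \<alpha> t z"
proof -
  have "0 < \<alpha> / (1 + cos (pi / (2 * real t))) * (z - y)"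
    using assms cos_pi_div_double_nonneg[of t] by (intro mult_pos_pos divide_pos_pos) auto
  then show ?thesis using cheb_scale_diff[of \<alpha> t z y] by linarith
qed

lemma cheb_scale_mono:
  assumes "0 \<le> \<alpha>" "y \<le> z"
  shows "cheb_scale \<alpha> t y \<le> cheb_scale \<alpha> t z"
proof -
  have "0 \<le> \<alpha> / (1 + cos (pi / (2 * real t))) * (z - y)"
    using assms cos_pi_div_double_nonneg[of t] by (intro mult_nonneg_nonneg divide_nonneg_nonneg) auto
  then show ?thesis using cheb_scale_diff[of \<alpha> t z y] by linarith
qed

lemma cheb_scale_one [simp]: "cheb_scale \<alpha> t 1 = \<alpha>"
  using cos_pi_div_double_nonneg[of t] by (simp add: cheb_scale_def)

lemma cheb_scale_neg_cos [simp]: "cheb_scale \<alpha> t (- cos (pi / (2 * real t))) = 0"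
  by (simp add: cheb_scale_def)

lemma cheb_scale_surj: "0 < \<alpha> \<Longrightarrow> \<exists>y. cheb_scale \<alpha> t y = x"
  using cos_pi_div_double_nonneg[of t]
  by (intro exI[of _ "((1 + cos (pi / (2 * real t))) * x) / \<alpha> - cos (pi / (2 * real t))"])
    (simp add: cheb_scale_def)

lemma cheb_root_last: "1 \<le> t \<Longrightarrow> cheb_root \<alpha> (t - 1) t = 0"
proof -
  assume "1 \<le> t"
  then have "pi * (real (t - 1) + 1/2) / real t = pi - pi / (2 * real t)"
    by (simp add: field_simps of_nat_diff)
  then show ?thesis by (simp add: cheb_root_eq_cheb_scale)
qed

lemma cheb_root_le: "0 \<le> \<alpha> \<Longrightarrow> cheb_root \<alpha> s t \<le> \<alpha>"
  using cheb_scale_mono[of \<alpha> "cos (pi * (real s + 1/2) / real t)" 1 t]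
  by (simp add: cheb_root_eq_cheb_scale)

lemma cheb_scale_cos_mem:
  assumes "0 \<le> \<alpha>" "k < t"
  shows "cheb_scale \<alpha> t (cos (real k * pi / real t)) \<in> {0..\<alpha>}"
proof -
  have "real k * pi / real t \<le> (real t - 1) * pi / real t"
    using assms by (intro divide_right_mono mult_right_mono) auto
  also have "\<dots> \<le> pi - pi / (2 * real t)" using assms by (simp add: field_simps)
  finally have "cos (pi - pi / (2 * real t)) \<le> cos (real k * pi / real t)"
    by (intro cos_monotone_0_pi_le) auto
  then show ?thesis
    using cheb_scale_mono[OF assms(1), of "- cos (pi / (2 * real t))" "cos (real k * pi / real t)" t]
      cheb_scale_mono[OF assms(1), of "cos (real k * pi / real t)" 1 t]
    by simp
qed

lemma cheb_scale_cos_strict_antimono: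
  assumes "0 < \<alpha>" "j < k" "k \<le> t"
  shows "cheb_scale \<alpha> t (cos (real k * pi / real t)) < cheb_scale \<alpha> t (cos (real j * pi / real t))"
proof (rule cheb_scale_strict_mono[OF assms(1)], rule cos_monotone_0_pi)
  show "real j * pi / real t < real k * pi / real t"
    using assms by (intro divide_strict_right_mono) auto
  show "real k * pi / real t \<le> pi" using assms by (simp add: divide_le_eq)
qed simp

lemma poly_fstar: "poly (fstar \<alpha> t) x = (\<Prod>s<t. (x - cheb_root \<alpha> s t) / (1 - cheb_root \<alpha> s t))"
  by (simp add: fstar_def poly_prod diff_divide_distrib)

context
  fixes \<alpha> :: real and t :: nat
  assumes \<alpha>_pos: "0 < \<alpha>" and \<alpha>_less_one: "\<alpha> < 1" and t_pos: "1 \<le> t"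
begin

lemma fstar_mem_Pt': "fstar \<alpha> t \<in> Pt' t"
proof -
  have "degree (fstar \<alpha> t) \<le> (\<Sum>s<t. degree (smult (1 / (1 - cheb_root \<alpha> s t)) [:- cheb_root \<alpha> s t, 1:]))"
    unfolding fstar_def by (rule order_trans[OF degree_prod_sum_le]) (simp_all add: o_def)
  also have "\<dots> \<le> (\<Sum>s<t. 1)"
    by (intro sum_mono order_trans[OF degree_smult_le]) simp
  finally have "degree (fstar \<alpha> t) \<le> t" by simp
  moreover have "poly (fstar \<alpha> t) 0 = 0"
    unfolding poly_fstar using cheb_root_last[OF t_pos] t_pos
    by (intro prod_zero) (auto intro!: bexI[of _ "t - 1"])
  moreover have "poly (fstar \<alpha> t) 1 = 1"
  proof -
    have "cheb_root \<alpha> s t \<noteq> 1" for s using cheb_root_le[of \<alpha> s t] \<alpha>_pos \<alpha>_less_one by simp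
    then show ?thesis unfolding poly_fstar by (simp add: prod.neutral)
  qed
  ultimately show ?thesis by (simp add: Pt'_def)
qed

lemma poly_fstar_mono:
  assumes "\<alpha> \<le> x" "x \<le> y"
  shows "0 \<le> poly (fstar \<alpha> t) x \<and> poly (fstar \<alpha> t) x \<le> poly (fstar \<alpha> t) y"
proof -
  have "0 \<le> (x - cheb_root \<alpha> s t) / (1 - cheb_root \<alpha> s t)
    \<and> (x - cheb_root \<alpha> s t) / (1 - cheb_root \<alpha> s t) \<le> (y - cheb_root \<alpha> s t) / (1 - cheb_root \<alpha> s t)"
    for s
    using cheb_root_le[of \<alpha> s t] \<alpha>_pos \<alpha>_less_one assms by (auto intro: divide_right_mono)
  then show ?thesis unfolding poly_fstar by (auto intro: prod_nonneg prod_mono)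
qed

lemma poly_fstar_cheb_scale:
  "poly (fstar \<alpha> t) (cheb_scale \<alpha> t y) = poly (fstar \<alpha> t) \<alpha> * poly (cheb_poly t) y"
proof -
  define \<kappa> where "\<kappa> = \<alpha> / (1 + cos (pi / (2 * real t)))"
  define C where "C = (\<Prod>s<t. 1 - cheb_root \<alpha> s t)"
  have affine: "poly (fstar \<alpha> t) (cheb_scale \<alpha> t z) = \<kappa> ^ t / (2 ^ (t - 1) * C) * poly (cheb_poly t) z"
    for z
  proof -
    have "poly (fstar \<alpha> t) (cheb_scale \<alpha> t z) = (\<Prod>s<t. cheb_scale \<alpha> t z - cheb_root \<alpha> s t) / C"
      unfolding poly_fstar C_def by (rule prod_dividef)
    also have "\<dots> = (\<Prod>s<t. \<kappa> * (z - cos (pi * (real s + 1/2) / real t))) / C"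
      by (simp add: cheb_root_eq_cheb_scale cheb_scale_diff \<kappa>_def)
    also have "\<dots> = \<kappa> ^ t * poly (cheb_poly t) z / 2 ^ (t - 1) / C"
      by (simp add: prod.distrib cheb_poly_eq_prod[OF t_pos] poly_prod)
    finally show ?thesis by simp
  qed
  from affine[of 1] have "poly (fstar \<alpha> t) \<alpha> = \<kappa> ^ t / (2 ^ (t - 1) * C)"
    by (simp add: poly_cheb_poly_one)
  with affine show ?thesis by simp
qed

lemma poly_fstar_alpha_pos: "0 < poly (fstar \<alpha> t) \<alpha>"
proof -
  obtain y where "cheb_scale \<alpha> t y = 1" using cheb_scale_surj[OF \<alpha>_pos] by blast
  then have "poly (fstar \<alpha> t) \<alpha> \<noteq> 0"
    using poly_fstar_cheb_scale[of y] fstar_mem_Pt' by (auto simp: Pt'_def)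
  moreover have "0 \<le> poly (fstar \<alpha> t) \<alpha>" using poly_fstar_mono by blast
  ultimately show ?thesis by simp
qed

lemma abs_poly_fstar_le:
  assumes "x \<in> {0..\<alpha>}"
  shows "\<bar>poly (fstar \<alpha> t) x\<bar> \<le> poly (fstar \<alpha> t) \<alpha>"
proof -
  obtain y where y: "cheb_scale \<alpha> t y = x" using cheb_scale_surj[OF \<alpha>_pos] by blast
  have "-1 \<le> y"
  proof (rule ccontr)
    assume "\<not> -1 \<le> y"
    then have "x < cheb_scale \<alpha> t (-1)" using y cheb_scale_strict_mono[OF \<alpha>_pos] by auto
    also have "\<dots> \<le> cheb_scale \<alpha> t (- cos (pi / (2 * real t)))"
      using \<alpha>_pos by (intro cheb_scale_mono) auto
    finally show False using assms by simp
  qed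
  moreover have "y \<le> 1"
    using y assms cheb_scale_strict_mono[OF \<alpha>_pos, of 1 y t] by force
  ultimately have "\<bar>poly (cheb_poly t) y\<bar> \<le> 1" by (intro abs_poly_cheb_poly_le_one) auto
  then show ?thesis
    using y poly_fstar_cheb_scale[of y] poly_fstar_alpha_pos
    by (simp add: abs_mult mult_le_cancel_left1)
qed

lemma poly_fstar_equioscillates:
  assumes "k < t"
  shows "poly (fstar \<alpha> t) (cheb_scale \<alpha> t (cos (real k * pi / real t))) = (-1) ^ k * poly (fstar \<alpha> t) \<alpha>"
  using poly_fstar_cheb_scale t_pos by (simp add: poly_cheb_poly_cos)

end

theorem theorem1:
  fixes \<alpha> \<beta> :: real and t :: nat
  assumes "0 < \<alpha>" and "\<alpha> < \<beta>" and "\<beta> < 1" and "1 \<le> t"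
  shows "fstar \<alpha> t \<in> Pt' t \<and> (\<forall>f \<in> Pt' t. ratio_obj \<alpha> \<beta> (fstar \<alpha> t) \<le> ratio_obj \<alpha> \<beta> f)"
proof -
  let ?f = "fstar \<alpha> t" and ?\<nu> = "\<lambda>k. cheb_scale \<alpha> t (cos (real k * pi / real t))"
  have params: "0 < \<alpha>" "\<alpha> < 1" "1 \<le> t" using assms by simp_all
  have "0 < poly ?f \<beta>"
    using poly_fstar_mono[OF params, of \<alpha> \<beta>] poly_fstar_alpha_pos[OF params] assms by simp
  moreover have "\<bar>poly ?f \<beta>\<bar> \<le> \<bar>poly ?f x\<bar>" if "x \<in> {\<beta>..1}" for x
    using poly_fstar_mono[OF params, of \<beta> x] that assms by auto
  ultimately have objective: "ratio_obj \<alpha> \<beta> ?f = ereal (poly ?f \<alpha> / poly ?f \<beta>)"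
    using poly_fstar_alpha_pos[OF params] abs_poly_fstar_le[OF params] assms
      ratio_obj_eqI[of \<alpha> \<alpha> ?f \<beta> \<beta>]
    by simp
  have "ereal (poly ?f \<alpha> / poly ?f \<beta>) \<le> ratio_obj \<alpha> \<beta> f" if "f \<in> Pt' t" for f
  proof (rule ratio_obj_ge)
    fix K assume "\<And>x. x \<in> {0..\<alpha>} \<Longrightarrow> \<bar>poly f x\<bar> \<le> K"
    then have "\<bar>poly f \<beta>\<bar> * poly ?f \<alpha> \<le> K * poly ?f \<beta>"
      using that fstar_mem_Pt'[OF params] poly_fstar_equioscillates[OF params] \<open>0 < poly ?f \<beta>\<close> assms
        cheb_scale_cos_mem[of \<alpha>] cheb_scale_cos_strict_antimono[of \<alpha>]
      by (intro equioscillating_poly_extremal[where \<nu> = ?\<nu>]) (auto simp: Pt'_def)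
    then show "poly ?f \<alpha> / poly ?f \<beta> * \<bar>poly f \<beta>\<bar> \<le> K"
      using \<open>0 < poly ?f \<beta>\<close> by (simp add: field_simps)
  qed (use assms poly_fstar_alpha_pos[OF params] \<open>0 < poly ?f \<beta>\<close> in auto)
  then show ?thesis using objective fstar_mem_Pt'[OF params] by simp
qed

end
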